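(* Let $f$ be an $(n-1)$-variable Boolean function and let $\bar f$ be the $n$-variable Boolean function $\bar f(x_1,\dots,x_n)=x_n+f(x_1,\dots,x_{n-1})$. Then $$\min({FAI}(f),{FAI}(1+f)+1)\le{FAI}(\bar f)\le\mathcal{FAI}(f)+2.$$
   Context: An $m$-variable Boolean function is a map $\mathbb{F}_2^m\to\mathbb{F}_2$, with algebraic degree $\deg$ the degree of its algebraic normal form. For $h$ an $m$-variable function, ${AN}^c(h)$ is the set of $g$ with $h\cdot g\neq0$, ${FAI}(h)$ is the minimum of $\deg(g)+\deg(h\cdot g)$ over $g\in{AN}^c(h)$, $g\neq 1$, and $\mathcal{FAI}(h)=\min({FAI}(h),{FAI}(1+h))$. *)

theory Defs
  imports Main "HOL-Library.Extended_Nat"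
begin

text \<open>Points of F_2^m are boolean lists of length m; an m-variable Boolean
function is a map bool list to bool, of which only the values on lists of
length m matter. Addition in F_2 is xor, multiplication is conjunction.\<close>

definition bvecs :: "nat \<Rightarrow> bool list set" where
  "bvecs m = {x. length x = m}"

definition supp :: "bool list \<Rightarrow> nat set" where
  "supp x = {i. i < length x \<and> x ! i}"

text \<open>ANF coefficient of the monomial prod_{i in S} x_i (Moebius transform):
a_S = sum over x with supp x subset of S of h x, in F_2.\<close>
definition anf_coeff :: "nat \<Rightarrow> (bool list \<Rightarrow> bool) \<Rightarrow> nat set \<Rightarrow> bool" where
  "anf_coeff m h S = odd (card {x \<in> bvecs m. supp x \<subseteq> S \<and> h x})"

definition alg_deg :: "nat \<Rightarrow> (bool list \<Rightarrow> bool) \<Rightarrow> nat" where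
  "alg_deg m h = Max (insert 0 {card S | S. S \<subseteq> {..<m} \<and> anf_coeff m h S})"

definition bprod :: "(bool list \<Rightarrow> bool) \<Rightarrow> (bool list \<Rightarrow> bool) \<Rightarrow> bool list \<Rightarrow> bool" where
  "bprod h g = (\<lambda>x. h x \<and> g x)"

definition bcompl :: "(bool list \<Rightarrow> bool) \<Rightarrow> bool list \<Rightarrow> bool" where
  "bcompl h = (\<lambda>x. \<not> h x)"   \<comment> \<open>1 + h\<close>

definition ANc :: "nat \<Rightarrow> (bool list \<Rightarrow> bool) \<Rightarrow> (bool list \<Rightarrow> bool) set" where
  "ANc m h = {g. \<exists>x\<in>bvecs m. bprod h g x}"

text \<open>FAI(h) = min { deg g + deg (h g) | g in AN^c(h), g \<noteq> 1 }; min of the empty set is infinity.\<close>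
definition FAI :: "nat \<Rightarrow> (bool list \<Rightarrow> bool) \<Rightarrow> enat" where
  "FAI m h = Inf {enat (alg_deg m g + alg_deg m (bprod h g)) | g.
                   g \<in> ANc m h \<and> \<not> (\<forall>x\<in>bvecs m. g x)}"

definition FAIcal :: "nat \<Rightarrow> (bool list \<Rightarrow> bool) \<Rightarrow> enat" where
  "FAIcal m h = min (FAI m h) (FAI m (bcompl h))"

text \<open>fbar(x_1,...,x_n) = x_n + f(x_1,...,x_{n-1}), with n = m + 1.\<close>
definition fbar :: "nat \<Rightarrow> (bool list \<Rightarrow> bool) \<Rightarrow> bool list \<Rightarrow> bool" where
  "fbar m f = (\<lambda>x. (x ! m) \<noteq> f (take m x))"

end

theory Submission
  imports Defs
begin

(* Write H|b for the restriction of an (m+1)-variable function H to the hyperplane x_{m+1} = b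
(its cofactor). Restricting never raises the degree, while multiplying a nonzero m-variable
function by x_{m+1} or by 1 + x_{m+1} raises it by exactly one. The cofactors of fbar are f and
1 + f, so a witness g for f or for 1 + f lifts to the witness (1 + x_{m+1}) g or x_{m+1} g for
fbar, which costs 2. Conversely, for a witness G of fbar with H = fbar G we have H|0 = f G|0 and
H|1 = (1 + f) G|1. Either G|0 is already a witness for f, or f G|0 = 0 or G|0 = 1; then H or 1 + G
vanishes off the hyperplane x_{m+1} = 1, which brings the extra degree needed to use G|1 as a
witness for 1 + f. In the remaining degenerate cases deg G + deg H exceeds deg f + 1, and
FAI(f) <= deg f + 2 is witnessed by a suitable affine function. *)

lemma finite_bvecs: "finite (bvecs m)"
  using finite_lists_length_eq[of "UNIV :: bool set" m] by (simp add: bvecs_def)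

lemma snoc_in_bvecs_iff [simp]: "x @ [b] \<in> bvecs (Suc m) \<longleftrightarrow> x \<in> bvecs m"
  by (auto simp: bvecs_def)

lemma bvecs_SucE:
  assumes "z \<in> bvecs (Suc m)"
  obtains x b where "x \<in> bvecs m" "z = x @ [b]"
proof -
  have "z = take m z @ [z ! m]" using assms
    by (simp add: bvecs_def) (metis lessI take_Suc_conv_app_nth take_all_iff order_refl)
  moreover have "take m z \<in> bvecs m" using assms by (simp add: bvecs_def)
  ultimately show ?thesis using that by blast
qed

lemma supp_subset_lessThan: "supp x \<subseteq> {..<length x}"
  by (auto simp: supp_def)

lemma finite_supp: "finite (supp x)"
  using supp_subset_lessThan finite_subset by blast

lemma supp_snoc: "supp (x @ [b]) = supp x \<union> (if b then {length x} else {})"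
  by (auto simp: supp_def nth_append less_Suc_eq)

lemma supp_inject: "length x = length y \<Longrightarrow> supp x = supp y \<Longrightarrow> x = y"
  by (rule nth_equalityI) (auto simp: supp_def set_eq_iff)

lemma supp_eq_empty_iff: "x \<in> bvecs m \<Longrightarrow> supp x = {} \<longleftrightarrow> x = replicate m False"
  by (auto simp: bvecs_def supp_def list_eq_iff_nth_eq)

lemma card_bvecs_Suc_supp_subset:
  "card {z \<in> bvecs (Suc m). supp z \<subseteq> S \<and> P z} =
     card {x \<in> bvecs m. supp x \<subseteq> S - {m} \<and> P (x @ [False])} +
     (if m \<in> S then card {x \<in> bvecs m. supp x \<subseteq> S - {m} \<and> P (x @ [True])} else 0)"
proof -
  define A0 where "A0 = {x \<in> bvecs m. supp x \<subseteq> S - {m} \<and> P (x @ [False])}"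
  define A1 where "A1 = (if m \<in> S then {x \<in> bvecs m. supp x \<subseteq> S - {m} \<and> P (x @ [True])} else {})"
  have m_notin_supp: "m \<notin> supp x" if "x \<in> bvecs m" for x
    using that supp_subset_lessThan[of x] by (auto simp: bvecs_def)
  have last_split:
    "{z \<in> bvecs (Suc m). supp z \<subseteq> S \<and> P z} = (\<lambda>x. x @ [False]) ` A0 \<union> (\<lambda>x. x @ [True]) ` A1"
  proof (intro set_eqI iffI)
    fix z assume z: "z \<in> {z \<in> bvecs (Suc m). supp z \<subseteq> S \<and> P z}"
    then obtain x b where "x \<in> bvecs m" "z = x @ [b]" by (blast elim: bvecs_SucE)
    with z m_notin_supp show "z \<in> (\<lambda>x. x @ [False]) ` A0 \<union> (\<lambda>x. x @ [True]) ` A1"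
      by (cases b) (auto simp: A0_def A1_def supp_snoc bvecs_def)
  qed (auto simp: A0_def A1_def supp_snoc bvecs_def split: if_splits)
  have "finite A0" "finite A1"
    using finite_bvecs by (auto simp: A0_def A1_def)
  then have "card ((\<lambda>x. x @ [False]) ` A0 \<union> (\<lambda>x. x @ [True]) ` A1) =
      card ((\<lambda>x. x @ [False]) ` A0) + card ((\<lambda>x. x @ [True]) ` A1)"
    by (intro card_Un_disjoint) auto
  also have "\<dots> = card A0 + card A1"
    by (simp add: card_image inj_on_def)
  finally show ?thesis
    unfolding last_split by (simp add: A0_def A1_def)
qed

lemma card_bvecs_supp_subset:
  "S \<subseteq> {..<m} \<Longrightarrow> card {x \<in> bvecs m. supp x \<subseteq> S} = 2 ^ card S"
proof (induction m arbitrary: S)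
  case 0
  then have "S = {}" by auto
  moreover have "{x \<in> bvecs 0. supp x \<subseteq> {}} = {[]}" by (auto simp: bvecs_def supp_def)
  ultimately show ?case by simp
next
  case (Suc m)
  have IH: "card {x \<in> bvecs m. supp x \<subseteq> S - {m}} = 2 ^ card (S - {m})"
    using Suc.prems by (intro Suc.IH) auto
  have "card {x \<in> bvecs (Suc m). supp x \<subseteq> S} = card {x \<in> bvecs (Suc m). supp x \<subseteq> S \<and> True}"
    by simp
  also have "\<dots> = 2 ^ card (S - {m}) + (if m \<in> S then 2 ^ card (S - {m}) else 0)"
    unfolding card_bvecs_Suc_supp_subset using IH by simp
  also have "\<dots> = 2 ^ card S"
  proof (cases "m \<in> S")
    case True
    moreover have "finite S" using Suc.prems finite_subset by blast
    ultimately have "card S = Suc (card (S - {m}))" by (metis card_Suc_Diff1)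
    then show ?thesis using True by (metis (full_types) mult_2 power_Suc)
  qed simp
  finally show ?case .
qed

lemma finite_anf_degrees: "finite {card S | S. S \<subseteq> {..<m} \<and> anf_coeff m h S}"
  by (rule finite_subset[of _ "card ` Pow {..<m}"]) auto

lemma card_le_alg_deg: "S \<subseteq> {..<m} \<Longrightarrow> anf_coeff m h S \<Longrightarrow> card S \<le> alg_deg m h"
  unfolding alg_deg_def using finite_anf_degrees by (intro Max_ge) auto

lemma alg_deg_leI:
  "(\<And>S. S \<subseteq> {..<m} \<Longrightarrow> anf_coeff m h S \<Longrightarrow> card S \<le> d) \<Longrightarrow> alg_deg m h \<le> d"
  unfolding alg_deg_def using finite_anf_degrees by (subst Max_le_iff) auto

lemma alg_deg_attained:
  assumes "S0 \<subseteq> {..<m}" "anf_coeff m h S0"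
  obtains S where "S \<subseteq> {..<m}" "anf_coeff m h S" "card S = alg_deg m h"
proof -
  have "alg_deg m h \<in> insert 0 {card S | S. S \<subseteq> {..<m} \<and> anf_coeff m h S}"
    unfolding alg_deg_def using finite_anf_degrees by (intro Max_in) auto
  moreover have "card S0 \<le> alg_deg m h" using assms by (rule card_le_alg_deg)
  ultimately show ?thesis using assms that by fastforce
qed

lemma alg_deg_cong: "(\<And>x. x \<in> bvecs m \<Longrightarrow> h x = h' x) \<Longrightarrow> alg_deg m h = alg_deg m h'"
proof -
  assume "\<And>x. x \<in> bvecs m \<Longrightarrow> h x = h' x"
  then have "anf_coeff m h = anf_coeff m h'"
    unfolding anf_coeff_def by (intro ext arg_cong[where f = "\<lambda>A. odd (card A)"]) auto
  then show ?thesis by (simp add: alg_deg_def)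
qed

lemma alg_deg_False: "alg_deg m (\<lambda>_. False) = 0"
  by (simp add: alg_deg_def anf_coeff_def)

text \<open>If h vanishes below x except at x itself, the Moebius sum defining the coefficient of supp x
has the single term h x; otherwise descend to a point of smaller support.\<close>

lemma ex_anf_coeff_supp:
  assumes "x \<in> bvecs m" "h x"
  shows "\<exists>y \<in> bvecs m. h y \<and> supp y \<subseteq> supp x \<and> anf_coeff m h (supp y)"
  using assms
proof (induction "card (supp x)" arbitrary: x rule: less_induct)
  case less
  show ?case
  proof (cases "anf_coeff m h (supp x)")
    case True
    with less.prems show ?thesis by blast
  next
    case False
    let ?A = "{y \<in> bvecs m. supp y \<subseteq> supp x \<and> h y}"
    have "?A \<noteq> {x}" using False by (auto simp: anf_coeff_def)
    moreover have "x \<in> ?A" using less.prems by simp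
    ultimately obtain y where y: "y \<in> ?A" "y \<noteq> x" by blast
    then have "supp y \<noteq> supp x"
      using less.prems supp_inject by (auto simp: bvecs_def)
    with y have "card (supp y) < card (supp x)"
      by (auto intro: psubset_card_mono finite_supp)
    with y less.hyps obtain y' where
      "y' \<in> bvecs m" "h y'" "supp y' \<subseteq> supp y" "anf_coeff m h (supp y')"
      by blast
    with y show ?thesis by blast
  qed
qed

lemma ex_anf_coeff:
  assumes "x \<in> bvecs m" "h x"
  obtains S where "S \<subseteq> {..<m}" "anf_coeff m h S"
proof -
  obtain y where y: "y \<in> bvecs m" "anf_coeff m h (supp y)"
    using ex_anf_coeff_supp[of x m h] assms by blast
  moreover have "supp y \<subseteq> {..<m}"
    using y supp_subset_lessThan[of y] by (simp add: bvecs_def)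
  ultimately show ?thesis using that by blast
qed

lemma anf_coeff_bcompl:
  assumes "S \<subseteq> {..<m}" "S \<noteq> {}"
  shows "anf_coeff m (bcompl h) S = anf_coeff m h S"
proof -
  let ?A = "{x \<in> bvecs m. supp x \<subseteq> S \<and> \<not> h x}"
    and ?B = "{x \<in> bvecs m. supp x \<subseteq> S \<and> h x}"
  have "card ?A + card ?B = card {x \<in> bvecs m. supp x \<subseteq> S}"
    using finite_bvecs by (subst card_Un_disjoint[symmetric]) (auto intro: arg_cong[where f = card])
  also have "\<dots> = 2 ^ card S" using assms(1) by (rule card_bvecs_supp_subset)
  finally have "even (card ?A + card ?B)"
    using assms finite_subset[OF assms(1)] by (simp add: card_gt_0_iff)
  then show ?thesis unfolding anf_coeff_def bcompl_def by auto
qed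

lemma alg_deg_bcompl: "alg_deg m (bcompl h) = alg_deg m h"
proof -
  have le: "alg_deg m (bcompl k) \<le> alg_deg m k" for k
  proof (rule alg_deg_leI)
    fix S assume "S \<subseteq> {..<m}" "anf_coeff m (bcompl k) S"
    then show "card S \<le> alg_deg m k"
      by (cases "S = {}") (auto simp: anf_coeff_bcompl intro: card_le_alg_deg)
  qed
  have "bcompl (bcompl h) = h" by (simp add: bcompl_def)
  then show ?thesis using le[of h] le[of "bcompl h"] by simp
qed

lemma alg_deg_True: "alg_deg m (\<lambda>_. True) = 0"
  using alg_deg_bcompl[of m "\<lambda>_. False"] by (simp add: bcompl_def alg_deg_False)

lemma alg_deg_pos_if_nonconstant:
  assumes "x \<in> bvecs m" "h x" "y \<in> bvecs m" "\<not> h y"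
  shows "0 < alg_deg m h"
proof -
  have pos: "0 < alg_deg m k"
    if k0: "\<not> k (replicate m False)" and kx: "x \<in> bvecs m" "k x" for k x
  proof -
    obtain y where y: "y \<in> bvecs m" "k y" "anf_coeff m k (supp y)"
      using ex_anf_coeff_supp[of x m k] kx by blast
    then have "supp y \<noteq> {}" using k0 supp_eq_empty_iff by metis
    moreover have "supp y \<subseteq> {..<m}" using y supp_subset_lessThan by (auto simp: bvecs_def)
    ultimately show ?thesis
      using y card_le_alg_deg[of "supp y" m k] finite_supp[of y] by fastforce
  qed
  show ?thesis
  proof (cases "h (replicate m False)")
    case True
    then have "0 < alg_deg m (bcompl h)" using assms by (intro pos) (auto simp: bcompl_def)
    then show ?thesis by (simp add: alg_deg_bcompl)
  qed (use assms pos in blast)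
qed

definition cofactor :: "bool \<Rightarrow> (bool list \<Rightarrow> bool) \<Rightarrow> bool list \<Rightarrow> bool" where
  "cofactor b H = (\<lambda>x. H (x @ [b]))"

text \<open>The product of h with the indicator x_{m+1} + b + 1 of the hyperplane x_{m+1} = b.\<close>

definition lift :: "bool \<Rightarrow> nat \<Rightarrow> (bool list \<Rightarrow> bool) \<Rightarrow> bool list \<Rightarrow> bool" where
  "lift b m h = (\<lambda>z. z ! m = b \<and> h (take m z))"

lemma lift_snoc [simp]: "x \<in> bvecs m \<Longrightarrow> lift b m h (x @ [c]) = (c = b \<and> h x)"
  by (auto simp: lift_def bvecs_def)

lemma fbar_snoc [simp]: "x \<in> bvecs m \<Longrightarrow> fbar m f (x @ [c]) = (c \<noteq> f x)"
  by (auto simp: fbar_def bvecs_def)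

lemma lift_cofactor_eq:
  assumes "\<forall>x \<in> bvecs m. \<not> H (x @ [\<not> b])" "z \<in> bvecs (Suc m)"
  shows "H z = lift b m (cofactor b H) z"
proof -
  obtain x c where "x \<in> bvecs m" "z = x @ [c]" using assms(2) by (rule bvecs_SucE)
  with assms(1) show ?thesis by (cases "c = b") (auto simp: cofactor_def)
qed

lemma bprod_lift:
  assumes "\<forall>x \<in> bvecs m. H (x @ [b]) = h x" "z \<in> bvecs (Suc m)"
  shows "bprod H (lift b m g) z = lift b m (bprod h g) z"
proof -
  obtain x c where "x \<in> bvecs m" "z = x @ [c]" using assms(2) by (rule bvecs_SucE)
  with assms(1) show ?thesis by (auto simp: bprod_def)
qed

lemma anf_coeff_lift:
  "anf_coeff (Suc m) (lift b m h) S = ((b \<longrightarrow> m \<in> S) \<and> anf_coeff m h (S - {m}))"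
proof -
  have "{x \<in> bvecs m. supp x \<subseteq> S - {m} \<and> lift b m h (x @ [c])} =
      (if c = b then {x \<in> bvecs m. supp x \<subseteq> S - {m} \<and> h x} else {})" for c
    by auto
  then show ?thesis
    unfolding anf_coeff_def card_bvecs_Suc_supp_subset by (cases b) auto
qed

lemma anf_coeff_cofactor:
  assumes "S \<subseteq> {..<m}"
  shows "anf_coeff m (cofactor b H) S =
    (anf_coeff (Suc m) H S \<noteq> (b \<and> anf_coeff (Suc m) H (insert m S)))"
proof -
  have "m \<notin> S" using assms by auto
  then have "S - {m} = S" "insert m S - {m} = S" by auto
  with \<open>m \<notin> S\<close> show ?thesis
    unfolding anf_coeff_def card_bvecs_Suc_supp_subset cofactor_def by (cases b) auto
qed

lemma alg_deg_lift_le: "alg_deg (Suc m) (lift b m h) \<le> Suc (alg_deg m h)"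
proof (rule alg_deg_leI)
  fix S assume S: "S \<subseteq> {..<Suc m}" "anf_coeff (Suc m) (lift b m h) S"
  then have "card (S - {m}) \<le> alg_deg m h"
    by (intro card_le_alg_deg) (auto simp: anf_coeff_lift)
  moreover have "card S \<le> Suc (card (S - {m}))"
    using finite_subset[OF S(1)] by (cases "m \<in> S") (simp_all add: card_Diff_singleton_if)
  ultimately show "card S \<le> Suc (alg_deg m h)" by simp
qed

lemma alg_deg_lift:
  assumes "x \<in> bvecs m" "h x"
  shows "alg_deg (Suc m) (lift b m h) = Suc (alg_deg m h)"
proof (rule antisym[OF alg_deg_lift_le])
  obtain S0 where "S0 \<subseteq> {..<m}" "anf_coeff m h S0" using assms by (rule ex_anf_coeff)
  then obtain S where S: "S \<subseteq> {..<m}" "anf_coeff m h S" "card S = alg_deg m h"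
    by (rule alg_deg_attained)
  then have "m \<notin> S" "finite S" by (auto intro: finite_subset)
  have "card (insert m S) \<le> alg_deg (Suc m) (lift b m h)"
    using S \<open>m \<notin> S\<close> by (intro card_le_alg_deg) (auto simp: anf_coeff_lift)
  with S \<open>m \<notin> S\<close> \<open>finite S\<close> show "Suc (alg_deg m h) \<le> alg_deg (Suc m) (lift b m h)"
    by simp
qed

lemma alg_deg_cofactor_le: "alg_deg m (cofactor b H) \<le> alg_deg (Suc m) H"
proof (rule alg_deg_leI)
  fix S assume S: "S \<subseteq> {..<m}" "anf_coeff m (cofactor b H) S"
  then consider "anf_coeff (Suc m) H S" | "anf_coeff (Suc m) H (insert m S)"
    by (auto simp: anf_coeff_cofactor)
  then show "card S \<le> alg_deg (Suc m) H"
  proof cases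
    case 1
    with S show ?thesis by (intro card_le_alg_deg) auto
  next
    case 2
    with S have "card (insert m S) \<le> alg_deg (Suc m) H" by (intro card_le_alg_deg) auto
    moreover have "card S \<le> card (insert m S)" using S finite_subset by (simp add: card_insert_le)
    ultimately show ?thesis by simp
  qed
qed

lemma alg_deg_cofactor_less:
  assumes "\<forall>x \<in> bvecs m. \<not> H (x @ [\<not> b])" "x \<in> bvecs m" "H (x @ [b])"
  shows "alg_deg m (cofactor b H) < alg_deg (Suc m) H"
proof -
  have "alg_deg (Suc m) H = alg_deg (Suc m) (lift b m (cofactor b H))"
    using assms(1) by (intro alg_deg_cong lift_cofactor_eq)
  also have "\<dots> = Suc (alg_deg m (cofactor b H))"
    using assms(3) by (intro alg_deg_lift[OF assms(2)]) (simp add: cofactor_def)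
  finally show ?thesis by simp
qed

lemma FAI_le:
  assumes "x \<in> bvecs m" "h x" "g x" "y \<in> bvecs m" "\<not> g y"
    and "alg_deg m g + alg_deg m (bprod h g) \<le> n"
  shows "FAI m h \<le> enat n"
proof -
  have "FAI m h \<le> enat (alg_deg m g + alg_deg m (bprod h g))"
    unfolding FAI_def ANc_def using assms(1-5) by (intro Inf_lower) (auto simp: bprod_def)
  also have "\<dots> \<le> enat n" using assms(6) by simp
  finally show ?thesis .
qed

lemma FAI_witness:
  assumes "FAI m h \<noteq> \<infinity>"
  obtains g where "g \<in> ANc m h" "\<not> (\<forall>x \<in> bvecs m. g x)"
    "FAI m h = enat (alg_deg m g + alg_deg m (bprod h g))"
proof -
  let ?A = "{enat (alg_deg m g + alg_deg m (bprod h g)) | g.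
    g \<in> ANc m h \<and> \<not> (\<forall>x \<in> bvecs m. g x)}"
  have "FAI m h = Inf ?A" by (simp only: FAI_def)
  with assms have "?A \<noteq> {}" by (metis Inf_empty top_enat_def)
  then obtain a where "a \<in> ?A" by blast
  then have "Inf ?A \<in> ?A" by (rule wellorder_InfI)
  then obtain g where "g \<in> ANc m h" "\<not> (\<forall>x \<in> bvecs m. g x)"
    "Inf ?A = enat (alg_deg m g + alg_deg m (bprod h g))"
    by auto
  then show ?thesis by (intro that) (simp_all add: FAI_def)
qed

lemma FAI_Suc_le_FAI_cofactor:
  assumes "\<forall>x \<in> bvecs m. H (x @ [b]) = h x"
  shows "FAI (Suc m) H \<le> FAI m h + 2"
proof (cases "FAI m h = \<infinity>")
  case False
  then obtain g where g: "g \<in> ANc m h" "\<not> (\<forall>x \<in> bvecs m. g x)"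
    and FAI_h: "FAI m h = enat (alg_deg m g + alg_deg m (bprod h g))"
    by (rule FAI_witness)
  obtain x where x: "x \<in> bvecs m" "h x" "g x" using g(1) by (auto simp: ANc_def bprod_def)
  obtain y where y: "y \<in> bvecs m" "\<not> g y" using g(2) by blast
  have "alg_deg (Suc m) (bprod H (lift b m g)) = alg_deg (Suc m) (lift b m (bprod h g))"
    using assms by (intro alg_deg_cong bprod_lift)
  then have "alg_deg (Suc m) (lift b m g) + alg_deg (Suc m) (bprod H (lift b m g))
      \<le> alg_deg m g + alg_deg m (bprod h g) + 2"
    using alg_deg_lift_le[of m b g] alg_deg_lift_le[of m b "bprod h g"] by simp
  then have "FAI (Suc m) H \<le> enat (alg_deg m g + alg_deg m (bprod h g) + 2)"
    using x y assms
    by (intro FAI_le[where x = "x @ [b]" and g = "lift b m g" and y = "y @ [b]"]) auto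
  then show ?thesis using FAI_h by (simp add: numeral_eq_enat)
qed simp

lemma FAI_Suc_le_alg_deg:
  assumes "z \<in> bvecs (Suc m)" "H z"
  shows "FAI (Suc m) H \<le> enat (alg_deg (Suc m) H + 2)"
proof -
  obtain x b where x: "x \<in> bvecs m" "z = x @ [b]" using assms(1) by (rule bvecs_SucE)
  let ?g = "lift b m (\<lambda>_. True)"
  have "alg_deg (Suc m) ?g \<le> 1"
    using alg_deg_lift_le[of m b "\<lambda>_. True"] by (simp add: alg_deg_True)
  moreover have "alg_deg (Suc m) (bprod H ?g) = alg_deg (Suc m) (lift b m (cofactor b H))"
    using bprod_lift[where H = H and h = "cofactor b H" and g = "\<lambda>_. True"]
    by (intro alg_deg_cong) (simp add: cofactor_def bprod_def)
  then have "alg_deg (Suc m) (bprod H ?g) \<le> Suc (alg_deg (Suc m) H)"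
    using alg_deg_lift_le[of m b "cofactor b H"] alg_deg_cofactor_le[of m b H] by simp
  moreover have "replicate m False @ [\<not> b] \<in> bvecs (Suc m)" by (simp add: bvecs_def)
  ultimately show ?thesis
    using assms x
    by (intro FAI_le[where x = z and g = ?g and y = "replicate m False @ [\<not> b]"]) auto
qed

lemma min_le_plus_one_if: "a \<le> enat n \<or> b < enat n \<Longrightarrow> min a (b + 1) \<le> enat n"
  by (auto simp: min_le_iff_disj eSuc_plus_1[symmetric] ileI1)

text \<open>The hypothesis FAI_f settles the degenerate cases in which G|1 = 1 or (1 + f) G|1 = 0.\<close>

context
  fixes m n :: nat and f G H :: "bool list \<Rightarrow> bool"
  assumes FAI_f: "FAI m f \<le> enat (alg_deg m f + 2)"
    and G_ANc: "G \<in> ANc (Suc m) (fbar m f)"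
    and G_not_one: "\<not> (\<forall>z \<in> bvecs (Suc m). G z)"
  defines "H \<equiv> bprod (fbar m f) G"
    and "n \<equiv> alg_deg (Suc m) G + alg_deg (Suc m) H"
begin

lemma fbar_witness_snoc: "x \<in> bvecs m \<Longrightarrow> H (x @ [c]) = (c \<noteq> f x \<and> G (x @ [c]))"
  by (simp add: H_def bprod_def)

lemma fbar_witness_nonzero: obtains z where "z \<in> bvecs (Suc m)" "H z"
  using G_ANc by (auto simp: ANc_def H_def)

lemma fbar_witness_FAI_le:
  assumes "alg_deg m f < alg_deg (Suc m) H"
  shows "FAI m f \<le> enat n"
proof -
  obtain z where "z \<in> bvecs (Suc m)" "G z"
    using fbar_witness_nonzero by (auto simp: H_def bprod_def)
  moreover obtain w where "w \<in> bvecs (Suc m)" "\<not> G w" using G_not_one by blast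
  ultimately have "0 < alg_deg (Suc m) G" by (rule alg_deg_pos_if_nonconstant)
  with assms have "alg_deg m f + 2 \<le> n" by (simp add: n_def)
  with FAI_f show ?thesis by (meson enat_ord_simps(1) order_trans)
qed

lemma fbar_witness_FAI_compl_less:
  assumes "x \<in> bvecs m" "\<not> f x" "G (x @ [True])" "y \<in> bvecs m" "\<not> G (y @ [True])"
    and "alg_deg m (cofactor True G) + alg_deg m (cofactor True H) < n"
  shows "FAI m (bcompl f) < enat n"
proof -
  have "alg_deg m (bprod (bcompl f) (cofactor True G)) = alg_deg m (cofactor True H)"
    by (intro alg_deg_cong) (simp add: fbar_witness_snoc cofactor_def bprod_def bcompl_def)
  with assms have "FAI m (bcompl f) \<le> enat (n - 1)"
    by (intro FAI_le[where g = "cofactor True G" and x = x and y = y])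
       (auto simp: cofactor_def bcompl_def)
  with assms(6) show ?thesis by (simp add: le_less_trans)
qed

lemma fbar_witness_bound_if_cofactor_zero:
  assumes "\<forall>x \<in> bvecs m. \<not> H (x @ [False])"
  shows "FAI m f \<le> enat n \<or> FAI m (bcompl f) < enat n"
proof -
  obtain z where "z \<in> bvecs (Suc m)" "H z" by (rule fbar_witness_nonzero)
  with assms obtain x where x: "x \<in> bvecs m" "H (x @ [True])" by (metis (full_types) bvecs_SucE)
  have H1_less: "alg_deg m (cofactor True H) < alg_deg (Suc m) H"
    using assms x by (intro alg_deg_cofactor_less) auto
  show ?thesis
  proof (cases "\<forall>y \<in> bvecs m. G (y @ [True])")
    case True
    then have "alg_deg m (cofactor True H) = alg_deg m (bcompl f)"
      by (intro alg_deg_cong) (simp add: fbar_witness_snoc cofactor_def bcompl_def)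
    with H1_less show ?thesis by (simp add: alg_deg_bcompl fbar_witness_FAI_le)
  next
    case False
    then obtain y where y: "y \<in> bvecs m" "\<not> G (y @ [True])" by blast
    have "alg_deg m (cofactor True G) \<le> alg_deg (Suc m) G" by (rule alg_deg_cofactor_le)
    with x y H1_less have "FAI m (bcompl f) < enat n"
      by (intro fbar_witness_FAI_compl_less[of x y]) (simp_all add: n_def fbar_witness_snoc)
    then show ?thesis ..
  qed
qed

lemma fbar_witness_bound_if_cofactor_one:
  assumes "\<forall>y \<in> bvecs m. G (y @ [False])"
  shows "FAI m f \<le> enat n \<or> FAI m (bcompl f) < enat n"
proof -
  obtain w where "w \<in> bvecs (Suc m)" "\<not> G w" using G_not_one by blast
  with assms obtain y where y: "y \<in> bvecs m" "\<not> G (y @ [True])"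
    by (metis (full_types) bvecs_SucE)
  have "alg_deg m (cofactor True (bcompl G)) < alg_deg (Suc m) (bcompl G)"
    using assms y by (intro alg_deg_cofactor_less) (auto simp: bcompl_def)
  moreover have "cofactor True (bcompl G) = bcompl (cofactor True G)"
    by (simp add: cofactor_def bcompl_def)
  ultimately have G1_less: "alg_deg m (cofactor True G) < alg_deg (Suc m) G"
    by (simp add: alg_deg_bcompl)
  show ?thesis
  proof (cases "\<exists>x \<in> bvecs m. \<not> f x \<and> G (x @ [True])")
    case True
    then obtain x where x: "x \<in> bvecs m" "\<not> f x" "G (x @ [True])" by blast
    have "alg_deg m (cofactor True H) \<le> alg_deg (Suc m) H" by (rule alg_deg_cofactor_le)
    with x y G1_less have "FAI m (bcompl f) < enat n"
      by (intro fbar_witness_FAI_compl_less[of x y]) (simp_all add: n_def)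
    then show ?thesis ..
  next
    case False
    then have H1_zero: "\<forall>x \<in> bvecs m. \<not> H (x @ [True])" by (simp add: fbar_witness_snoc)
    obtain z where "z \<in> bvecs (Suc m)" "H z" by (rule fbar_witness_nonzero)
    with H1_zero obtain x where x: "x \<in> bvecs m" "H (x @ [False])"
      by (metis (full_types) bvecs_SucE)
    have "alg_deg m (cofactor False H) < alg_deg (Suc m) H"
      using H1_zero x by (intro alg_deg_cofactor_less) auto
    moreover have "alg_deg m (cofactor False H) = alg_deg m f"
      using assms by (intro alg_deg_cong) (simp add: fbar_witness_snoc cofactor_def)
    ultimately show ?thesis by (simp add: fbar_witness_FAI_le)
  qed
qed

lemma fbar_witness_bound: "FAI m f \<le> enat n \<or> FAI m (bcompl f) < enat n"
proof -
  consider (G0_witness) x y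
      where "x \<in> bvecs m" "f x" "G (x @ [False])" "y \<in> bvecs m" "\<not> G (y @ [False])"
    | (H0_zero) "\<forall>x \<in> bvecs m. \<not> H (x @ [False])"
    | (G0_one) "\<forall>y \<in> bvecs m. G (y @ [False])"
    by (auto simp: fbar_witness_snoc)
  then show ?thesis
  proof cases
    case G0_witness
    have "alg_deg m (bprod f (cofactor False G)) = alg_deg m (cofactor False H)"
      by (intro alg_deg_cong) (simp add: fbar_witness_snoc cofactor_def bprod_def)
    then have "FAI m f \<le> enat n"
      using G0_witness alg_deg_cofactor_le[of m False G] alg_deg_cofactor_le[of m False H]
      by (intro FAI_le[where g = "cofactor False G" and x = x and y = y])
         (auto simp: cofactor_def n_def)
    then show ?thesis ..
  qed (simp_all add: fbar_witness_bound_if_cofactor_zero fbar_witness_bound_if_cofactor_one)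
qed

end

theorem corollary2:
  fixes f :: "bool list \<Rightarrow> bool" and m :: nat
  assumes "m \<ge> 1"
    and "\<exists>x\<in>bvecs m. f x"
  shows "min (FAI m f) (FAI m (bcompl f) + 1) \<le> FAI (Suc m) (fbar m f)
         \<and> FAI (Suc m) (fbar m f) \<le> FAIcal m f + 2"
proof
  obtain k where k: "m = Suc k" using assms(1) by (cases m) auto
  have FAI_f: "FAI m f \<le> enat (alg_deg m f + 2)"
    using assms(2) unfolding k by (blast intro: FAI_Suc_le_alg_deg)
  show "min (FAI m f) (FAI m (bcompl f) + 1) \<le> FAI (Suc m) (fbar m f)"
    unfolding FAI_def[of "Suc m" "fbar m f"]
    using fbar_witness_bound[OF FAI_f] by (auto intro!: Inf_greatest min_le_plus_one_if)
  have "FAI (Suc m) (fbar m f) \<le> FAI m f + 2"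
    by (rule FAI_Suc_le_FAI_cofactor[where b = False]) simp
  moreover have "FAI (Suc m) (fbar m f) \<le> FAI m (bcompl f) + 2"
    by (rule FAI_Suc_le_FAI_cofactor[where b = True]) (simp add: bcompl_def)
  ultimately show "FAI (Suc m) (fbar m f) \<le> FAIcal m f + 2"
    by (simp add: FAIcal_def min_def)
qed

end
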